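(* For every $v\in\,]-\infty,-\mu_\kappa[\,\cap\mathbb Z_{d,\ell}$ one has $\epsilon(v)=-\mu_\kappa-v>0$, and $\epsilon(-\mu_\kappa)=\min(\mathcal V_1\setminus\{-\mu_\kappa\})+\mu_\kappa$ (with $\min\emptyset=+\infty$).
   Context: Let $\mathbf K$ be a field and $\ell\geq 2$ an integer. Let $L=a_n\phi_\ell^n+\dots+a_0$ with $n\geq1$, $a_i\in\mathbf K[z]$, $a_0a_n\neq0$, where $\phi_\ell(f)(z)=f(z^\ell)$ acting on Hahn series with coefficients in $\mathbf K$ and value group $\mathbb Q$. Let $\mathcal P(L)=\{(\ell^i,j): 0\le i\le n,\ j\in\operatorname{supp} a_i\}$. The Newton polygon of $L$ is the convex hull of $\{(\ell^i,j): 0\le i\le n,\ j\geq\operatorname{val} a_i\}\subset\mathbb R^2$; its non-vertical edges have slopes $\mu_1<\dots<\mu_\kappa$, $\mathcal S(L)=\{\mu_1,\dots,\mu_\kappa\}$. Let $d\geq1$ be a common multiple of the denominators of the $\mu_k$ and $\mathbb Z_{d,\ell}=\bigcup_{i\geq0}\frac{1}{d\ell^i}\mathbb Z$. Define $\Psi(v)=\{v\ell^i+j:(\ell^i,j)\in\mathcal P(L)\}$, $\pi(q)=\max\{(q-j)/\ell^i:(\ell^i,j)\in\mathcal P(L)\}$. Let $\mathcal V_0=-\mathcal S(L)$, $\mathcal V_{i+1}=\bigcup_{v\in\mathcal V_i}\pi(\Psi(v))$, $\mathcal V=\bigcup_{i\ge0}\mathcal V_i$ (a well-ordered set). For $v\in\mathbb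 Q$ let $\epsilon(v)=\min\{w\in\mathcal V: w>v\}-v\in\mathbb Q_{>0}\cup\{+\infty\}$ ($+\infty$ if this set is empty). *)

theory Defs
  imports "HOL-Analysis.Analysis" "HOL-Computational_Algebra.Polynomial"
begin

text \<open>The operator L = a_n phi_l^n + ... + a_0 is represented by its coefficient
  family a :: nat => 'k poly (only a 0, ..., a n matter), the order n and l.\<close>

definition pval :: "'k::zero poly \<Rightarrow> nat" where
  "pval p = (LEAST j. coeff p j \<noteq> 0)"

definition PL :: "nat \<Rightarrow> nat \<Rightarrow> (nat \<Rightarrow> 'k::zero poly) \<Rightarrow> (real \<times> real) set" where
  "PL l n a = {(real (l ^ i), real j) | i j. i \<le> n \<and> coeff (a i) j \<noteq> 0}"

definition newton_polygon :: "nat \<Rightarrow> nat \<Rightarrow> (nat \<Rightarrow> 'k::zero poly) \<Rightarrow> (real \<times> real) set" where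
  "newton_polygon l n a =
     convex hull {(real (l ^ i), y) | i y. i \<le> n \<and> a i \<noteq> 0 \<and> y \<ge> real (pval (a i))}"

definition slopes :: "nat \<Rightarrow> nat \<Rightarrow> (nat \<Rightarrow> 'k::zero poly) \<Rightarrow> real set" where
  "slopes l n a = {\<mu>. \<exists>F. F face_of newton_polygon l n a \<and> aff_dim F = 1 \<and>
      (\<exists>p\<in>F. \<exists>q\<in>F. fst p \<noteq> fst q \<and> \<mu> = (snd q - snd p) / (fst q - fst p))}"

definition Zdl :: "nat \<Rightarrow> nat \<Rightarrow> real set" where
  "Zdl d l = {x. \<exists>i::nat. \<exists>k::int. x = real_of_int k / (real d * real l ^ i)}"

definition Psi :: "nat \<Rightarrow> nat \<Rightarrow> (nat \<Rightarrow> 'k::zero poly) \<Rightarrow> real \<Rightarrow> real set" where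
  "Psi l n a v = {v * x + y | x y. (x, y) \<in> PL l n a}"

definition piL :: "nat \<Rightarrow> nat \<Rightarrow> (nat \<Rightarrow> 'k::zero poly) \<Rightarrow> real \<Rightarrow> real" where
  "piL l n a q = Max {(q - y) / x | x y. (x, y) \<in> PL l n a}"

primrec Vs :: "nat \<Rightarrow> nat \<Rightarrow> (nat \<Rightarrow> 'k::zero poly) \<Rightarrow> nat \<Rightarrow> real set" where
  "Vs l n a 0 = uminus ` slopes l n a"
| "Vs l n a (Suc i) = (\<Union>v\<in>Vs l n a i. piL l n a ` Psi l n a v)"

definition VV :: "nat \<Rightarrow> nat \<Rightarrow> (nat \<Rightarrow> 'k::zero poly) \<Rightarrow> real set" where
  "VV l n a = (\<Union>i. Vs l n a i)"

definition epsV :: "nat \<Rightarrow> nat \<Rightarrow> (nat \<Rightarrow> 'k::zero poly) \<Rightarrow> real \<Rightarrow> ereal" where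
  "epsV l n a v = (if {w \<in> VV l n a. w > v} = {} then \<infinity>
      else ereal ((LEAST w. w \<in> VV l n a \<and> v < w) - v))"

end

theory Submission
  imports Defs
begin

text \<open>Since \<open>\<pi>(\<Psi>(v)) \<ge> v\<close> and \<open>\<V>\<^sub>0 = -\<S>(L)\<close>, every element of \<open>\<V>\<close> is at least
  \<open>-\<mu>\<^sub>\<kappa>\<close>, which itself lies in \<open>\<V>\<close>; this gives \<open>\<epsilon>(v) = -\<mu>\<^sub>\<kappa> - v\<close> below it for every
  \<open>v\<close>. An element \<open>w > -\<mu>\<^sub>\<kappa>\<close> of \<open>\<V>\<close> is the end
  of an increasing chain \<open>v\<^sub>0 \<le> v\<^sub>1 \<le> \<dots> \<le> w\<close> starting in \<open>\<V>\<^sub>0 \<subseteq> \<V>\<^sub>1\<close>; the last link leaving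
  \<open>-\<mu>\<^sub>\<kappa>\<close> (if any) lands in \<open>\<V>\<^sub>1\<close>, so \<open>w\<close> dominates an element of \<open>\<V>\<^sub>1\<close> above \<open>-\<mu>\<^sub>\<kappa>\<close>.
  The geometric input is that every edge of the Newton polygon is a lower supporting line
  through two points of \<open>\<P>(L)\<close>: this yields \<open>\<V>\<^sub>0 \<subseteq> \<V>\<^sub>1\<close> and the finiteness of \<open>\<S>(L)\<close>.\<close>

definition intercept :: "real \<Rightarrow> real \<times> real \<Rightarrow> real" where
  "intercept \<mu> r = snd r - \<mu> * fst r"

lemma intercept_convex_combination:
  "intercept \<mu> (u *\<^sub>R x + v *\<^sub>R y) = u * intercept \<mu> x + v * intercept \<mu> y"
  unfolding intercept_def by (simp add: algebra_simps)

lemma intercept_eq_iff_slope: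
  assumes "fst p \<noteq> fst q"
  shows "intercept \<mu> q = intercept \<mu> p \<longleftrightarrow> \<mu> = (snd q - snd p) / (fst q - fst p)"
  using assms unfolding intercept_def by (auto simp: field_simps)

lemma convex_intercept_ge: "convex {x. c \<le> intercept \<mu> x}"
proof -
  have "{x. c \<le> intercept \<mu> x} = {x. ((- \<mu>, 1) :: real \<times> real) \<bullet> x \<ge> c}"
    by (auto simp: intercept_def inner_prod_def)
  then show ?thesis by (simp add: convex_halfspace_ge)
qed

lemma convex_hull_ray_closed:
  fixes S :: "'a::real_vector set"
  assumes "\<And>x t. x \<in> S \<Longrightarrow> 0 \<le> t \<Longrightarrow> x + t *\<^sub>R u \<in> S" and "x \<in> convex hull S" and "0 \<le> t"
  shows "x + t *\<^sub>R u \<in> convex hull S"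
proof -
  have "(\<lambda>x. t *\<^sub>R u + x) ` S \<subseteq> S" using assms(1,3) by (auto simp: add.commute)
  then have "(\<lambda>x. t *\<^sub>R u + x) ` (convex hull S) \<subseteq> convex hull S"
    by (metis convex_hull_translation hull_mono)
  then show ?thesis using assms(2) by (auto simp: add.commute)
qed

lemma collinear_points_same_intercept:
  fixes F :: "(real \<times> real) set"
  assumes "aff_dim F = 1" "p \<in> F" "q \<in> F" "fst p \<noteq> fst q" "r \<in> F"
  shows "intercept ((snd q - snd p) / (fst q - fst p)) r = intercept ((snd q - snd p) / (fst q - fst p)) p"
    (is "intercept ?\<mu> r = _")
proof -
  have "p \<noteq> q" using assms(4) by auto
  have "affine hull {p, q} = affine hull F"
  proof (rule affine_dim_equal)
    show "affine hull {p, q} \<subseteq> affine hull F" using assms(2,3) by (intro hull_mono) auto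
  qed (use assms(1) \<open>p \<noteq> q\<close> in simp_all)
  moreover have "r \<in> affine hull F" using assms(5) hull_subset[of F affine] by blast
  ultimately obtain u v where uv: "u + v = 1" "r = u *\<^sub>R p + v *\<^sub>R q"
    unfolding affine_hull_2 by blast
  have "intercept ?\<mu> q = intercept ?\<mu> p" using intercept_eq_iff_slope[OF assms(4)] by simp
  then show ?thesis using uv by (simp add: intercept_convex_combination distrib_right[symmetric])
qed

lemma open_segment_extension:
  fixes m r :: "'a::real_vector"
  assumes "0 < \<delta>" "r \<noteq> m"
  shows "m \<in> open_segment r (m + \<delta> *\<^sub>R (m - r))"
proof -
  let ?z = "m + \<delta> *\<^sub>R (m - r)"
  have m_eq: "(1 + \<delta>) *\<^sub>R m = \<delta> *\<^sub>R r + ?z" by (simp add: algebra_simps)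
  have "m = (1 / (1 + \<delta>)) *\<^sub>R ((1 + \<delta>) *\<^sub>R m)" using assms(1) by simp
  also have "\<dots> = (1 - 1 / (1 + \<delta>)) *\<^sub>R r + (1 / (1 + \<delta>)) *\<^sub>R ?z"
    unfolding m_eq using assms(1) by (simp add: algebra_simps field_simps)
  finally have "m = (1 - 1 / (1 + \<delta>)) *\<^sub>R r + (1 / (1 + \<delta>)) *\<^sub>R ?z" .
  moreover have "r \<noteq> ?z"
  proof
    assume "r = ?z"
    then have "(1 + \<delta>) *\<^sub>R (m - r) = 0" by (simp add: algebra_simps)
    then show False using assms by (simp add: add_pos_pos[of 1 \<delta>, THEN less_imp_neq, symmetric])
  qed
  ultimately show ?thesis
    using assms(1) unfolding in_segment(2) by (intro conjI exI[of _ "1 / (1 + \<delta>)"]) auto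
qed

lemma edge_supports_upward_closed:
  fixes K F :: "(real \<times> real) set"
  assumes K_up: "\<And>r t. r \<in> K \<Longrightarrow> 0 \<le> t \<Longrightarrow> r + (0, t) \<in> K"
    and face: "F face_of K" and dim: "aff_dim F = 1"
    and pq: "p \<in> F" "q \<in> F" "fst p \<noteq> fst q" and \<mu>: "\<mu> = (snd q - snd p) / (fst q - fst p)"
    and r: "r \<in> K"
  shows "intercept \<mu> p \<le> intercept \<mu> r"
proof (rule ccontr)
  define c where "c = intercept \<mu> p"
  assume "\<not> ?thesis"
  then have fr: "intercept \<mu> r < c" unfolding c_def by simp
  have onF: "intercept \<mu> x = c" if "x \<in> F" for x
    using collinear_points_same_intercept[OF dim pq that] unfolding \<mu> c_def .
  have cF: "convex F" and FK: "F \<subseteq> K"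
    using face_of_imp_convex[OF face] face_of_imp_subset[OF face] .
  define m where "m = (1/2) *\<^sub>R p + (1/2) *\<^sub>R q"
  have mF: "m \<in> F" unfolding m_def by (rule convexD[OF cF pq(1,2)]) auto
  text \<open>Push \<open>m\<close> away from \<open>r\<close> to a point \<open>z\<close> strictly above the edge; \<open>\<delta>\<close> is chosen so small
    that \<open>z\<close> still lies vertically above a point \<open>s\<close> of the segment \<open>[p, q]\<close>.\<close>
  define D where "D = (fst m - fst r) / (fst q - fst p)"
  define \<delta> where "\<delta> = 1 / (2 * (1 + \<bar>D\<bar>))"
  have \<delta>0: "\<delta> > 0" unfolding \<delta>_def by simp
  have "\<bar>\<delta> * D\<bar> \<le> 1/2" unfolding \<delta>_def by (simp add: abs_mult field_simps)
  then have th: "0 \<le> 1/2 + \<delta> * D" "1/2 + \<delta> * D \<le> 1" by auto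
  define z where "z = m + \<delta> *\<^sub>R (m - r)"
  define s where "s = (1 - (1/2 + \<delta> * D)) *\<^sub>R p + (1/2 + \<delta> * D) *\<^sub>R q"
  have sF: "s \<in> F" unfolding s_def by (rule convexD_alt[OF cF pq(1,2) th])
  have D: "D * (fst q - fst p) = fst m - fst r" unfolding D_def using pq(3) by simp
  have "fst s = (fst p + fst q) / 2 + \<delta> * (D * (fst q - fst p))"
    unfolding s_def by (simp add: field_simps)
  also have "\<dots> = fst z" unfolding D z_def by (simp add: m_def add_divide_distrib)
  finally have "fst s = fst z" .
  moreover have "intercept \<mu> z = c + \<delta> * (c - intercept \<mu> r)"
    using onF[OF mF] unfolding z_def intercept_def by (simp add: algebra_simps)
  ultimately have z_above_s: "z = s + (0, intercept \<mu> z - c)" and fz: "intercept \<mu> z > c"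
    using onF[OF sF] fr \<delta>0 unfolding intercept_def by (auto simp: prod_eq_iff)
  have zK: "z \<in> K" using K_up[of s "intercept \<mu> z - c"] sF FK fz z_above_s by auto
  have "r \<noteq> m" using fr onF[OF mF] by auto
  then have "m \<in> open_segment r z" unfolding z_def by (rule open_segment_extension[OF \<delta>0])
  then have "r \<in> F" using face_ofD[OF face _ r zK mF] by blast
  then show False using onF[of r] fr by simp
qed

definition newton_generators :: "nat \<Rightarrow> nat \<Rightarrow> (nat \<Rightarrow> 'k::zero poly) \<Rightarrow> (real \<times> real) set" where
  "newton_generators l n a =
     {(real (l ^ i), y) | i y. i \<le> n \<and> a i \<noteq> 0 \<and> y \<ge> real (pval (a i))}"

lemma newton_polygon_eq_convex_hull:
  "newton_polygon l n a = convex hull newton_generators l n a"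
  unfolding newton_polygon_def newton_generators_def by simp

lemma finite_PL: "finite (PL l n a)"
proof -
  have "PL l n a \<subseteq> (\<lambda>(i, j). (real (l ^ i), real j)) ` (SIGMA i:{..n}. {..degree (a i)})"
    unfolding PL_def by (fastforce intro: le_degree)
  then show ?thesis by (rule finite_subset) (auto intro!: finite_SigmaI)
qed

lemma coeff_pval_nonzero: "p \<noteq> 0 \<Longrightarrow> coeff p (pval p) \<noteq> 0"
  unfolding pval_def by (rule LeastI_ex) (metis leading_coeff_0_iff)

lemma pval_le: "coeff p j \<noteq> 0 \<Longrightarrow> pval p \<le> j"
  unfolding pval_def by (rule Least_le)

lemma PL_fst_ge_1: "l \<ge> 1 \<Longrightarrow> r \<in> PL l n a \<Longrightarrow> fst r \<ge> 1"
  unfolding PL_def by auto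

lemma PL_subset_newton_generators: "PL l n a \<subseteq> newton_generators l n a"
  unfolding PL_def newton_generators_def by (fastforce intro: pval_le)

lemma PL_subset_newton_polygon: "PL l n a \<subseteq> newton_polygon l n a"
  unfolding newton_polygon_eq_convex_hull
  using PL_subset_newton_generators hull_subset[of "newton_generators l n a" convex] by (rule subset_trans)

lemma newton_generators_above_PL:
  assumes "r \<in> newton_generators l n a"
  obtains y where "(fst r, y) \<in> PL l n a" "y \<le> snd r"
proof -
  obtain i y where r: "r = (real (l ^ i), y)" "i \<le> n" "a i \<noteq> 0" "y \<ge> real (pval (a i))"
    using assms unfolding newton_generators_def by blast
  have "(fst r, real (pval (a i))) \<in> PL l n a"
    unfolding PL_def using r coeff_pval_nonzero by auto
  then show ?thesis using that r by auto
qed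

lemma newton_polygon_shift_up:
  assumes "r \<in> newton_polygon l n a" "0 \<le> t"
  shows "r + (0, t) \<in> newton_polygon l n a"
proof -
  have "x + s *\<^sub>R (0, 1) \<in> newton_generators l n a"
    if "x \<in> newton_generators l n a" "0 \<le> s" for x and s :: real
    using that unfolding newton_generators_def by force
  from convex_hull_ray_closed[OF this] show ?thesis
    using assms unfolding newton_polygon_eq_convex_hull by simp
qed

lemma newton_polygon_above_line:
  assumes "\<forall>r\<in>PL l n a. c \<le> intercept \<mu> r" and "r \<in> newton_polygon l n a"
  shows "c \<le> intercept \<mu> r"
proof -
  have "newton_generators l n a \<subseteq> {x. c \<le> intercept \<mu> x}"
  proof
    fix x assume "x \<in> newton_generators l n a"
    then obtain y where y: "(fst x, y) \<in> PL l n a" "y \<le> snd x"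
      by (rule newton_generators_above_PL)
    then show "x \<in> {x. c \<le> intercept \<mu> x}" using assms(1) by (force simp: intercept_def)
  qed
  then have "newton_polygon l n a \<subseteq> {x. c \<le> intercept \<mu> x}"
    unfolding newton_polygon_eq_convex_hull by (intro hull_minimal convex_intercept_ge)
  then show ?thesis using assms(2) by blast
qed

lemma newton_polygon_meets_line_vertically:
  assumes above: "\<forall>r\<in>PL l n a. c \<le> intercept \<mu> r"
    and on_line: "\<forall>r\<in>PL l n a. intercept \<mu> r = c \<longrightarrow> fst r = x0"
    and "r \<in> newton_polygon l n a" "intercept \<mu> r = c"
  shows "fst r = x0"
proof -
  let ?H = "{x. c \<le> intercept \<mu> x \<and> (intercept \<mu> x = c \<longrightarrow> fst x = x0)}"
  have "newton_generators l n a \<subseteq> ?H"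
  proof
    fix x assume "x \<in> newton_generators l n a"
    then obtain y where y: "(fst x, y) \<in> PL l n a" "y \<le> snd x"
      by (rule newton_generators_above_PL)
    then have "c \<le> intercept \<mu> (fst x, y)" "intercept \<mu> (fst x, y) \<le> intercept \<mu> x"
      using above by (auto simp: intercept_def)
    then show "x \<in> ?H" using on_line y(1) by force
  qed
  moreover have "convex ?H"
  proof (rule convexI)
    fix x y and u v :: real
    assume x: "x \<in> ?H" and y: "y \<in> ?H" and uv: "0 \<le> u" "0 \<le> v" "u + v = 1"
    have "u * c + v * c = c" using uv(3) by (metis distrib_right mult_1)
    then have lin: "intercept \<mu> (u *\<^sub>R x + v *\<^sub>R y) - c
        = u * (intercept \<mu> x - c) + v * (intercept \<mu> y - c)"
      unfolding intercept_convex_combination right_diff_distrib by linarith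
    have pos: "u * (intercept \<mu> x - c) \<ge> 0" "v * (intercept \<mu> y - c) \<ge> 0"
      using x y uv by auto
    have "fst (u *\<^sub>R x + v *\<^sub>R y) = x0" if "intercept \<mu> (u *\<^sub>R x + v *\<^sub>R y) = c"
    proof -
      have "u * (intercept \<mu> x - c) = 0" "v * (intercept \<mu> y - c) = 0"
        using lin pos that by linarith+
      then show ?thesis using x y uv(3) by (auto simp flip: distrib_right)
    qed
    moreover have "c \<le> intercept \<mu> (u *\<^sub>R x + v *\<^sub>R y)" using lin pos by linarith
    ultimately show "u *\<^sub>R x + v *\<^sub>R y \<in> ?H" by blast
  qed
  ultimately have "newton_polygon l n a \<subseteq> ?H"
    unfolding newton_polygon_eq_convex_hull by (rule hull_minimal)
  then show ?thesis using assms(3,4) by blast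
qed

lemma slope_edge_in_PL:
  assumes "\<mu> \<in> slopes l n a"
  shows "\<exists>r0\<in>PL l n a. \<exists>r1\<in>PL l n a. fst r0 \<noteq> fst r1
           \<and> intercept \<mu> r1 = intercept \<mu> r0 \<and> (\<forall>r\<in>PL l n a. intercept \<mu> r0 \<le> intercept \<mu> r)"
proof -
  obtain F p q where F: "F face_of newton_polygon l n a" "aff_dim F = 1"
    and pq: "p \<in> F" "q \<in> F" "fst p \<noteq> fst q" "\<mu> = (snd q - snd p) / (fst q - fst p)"
    using assms unfolding slopes_def by blast
  have pqK: "p \<in> newton_polygon l n a" "q \<in> newton_polygon l n a"
    using face_of_imp_subset[OF F(1)] pq by auto
  have edge_below: "intercept \<mu> p \<le> intercept \<mu> r" if "r \<in> newton_polygon l n a" for r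
    by (rule edge_supports_upward_closed[OF newton_polygon_shift_up F pq that])
  have q_on_edge: "intercept \<mu> q = intercept \<mu> p"
    using collinear_points_same_intercept[OF F(2) pq(1-3) pq(2)] pq(4) by simp
  have "newton_generators l n a \<noteq> {}"
    using pqK unfolding newton_polygon_eq_convex_hull by auto
  then have "PL l n a \<noteq> {}" by (metis ex_in_conv newton_generators_above_PL)
  define r0 where "r0 = arg_min_on (intercept \<mu>) (PL l n a)"
  have r0: "r0 \<in> PL l n a" "\<forall>r\<in>PL l n a. intercept \<mu> r0 \<le> intercept \<mu> r"
    using arg_min_if_finite[OF finite_PL \<open>PL l n a \<noteq> {}\<close>, of "intercept \<mu>"]
    unfolding r0_def by (auto simp: not_less)
  have "intercept \<mu> r0 \<le> intercept \<mu> p"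
    using newton_polygon_above_line[OF r0(2) pqK(1)] .
  moreover have "intercept \<mu> p \<le> intercept \<mu> r0"
    using edge_below PL_subset_newton_polygon r0(1) by blast
  ultimately have r0_on_edge: "intercept \<mu> r0 = intercept \<mu> p" by simp
  have "\<exists>r1\<in>PL l n a. fst r0 \<noteq> fst r1 \<and> intercept \<mu> r1 = intercept \<mu> r0"
  proof (rule ccontr)
    assume "\<not> ?thesis"
    then have "\<forall>r\<in>PL l n a. intercept \<mu> r = intercept \<mu> r0 \<longrightarrow> fst r = fst r0" by auto
    from newton_polygon_meets_line_vertically[OF r0(2) this]
    have "fst p = fst r0" "fst q = fst r0" using pqK r0_on_edge q_on_edge by auto
    then show False using pq(3) by simp
  qed
  then show ?thesis using r0 by blast
qed

lemma finite_slopes: "finite (slopes l n a)"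
proof -
  let ?slope = "\<lambda>(r0, r1). (snd r1 - snd r0) / (fst r1 - fst r0)"
  have "slopes l n a \<subseteq> ?slope ` (PL l n a \<times> PL l n a)"
  proof
    fix \<mu> assume "\<mu> \<in> slopes l n a"
    then obtain r0 r1 where "r0 \<in> PL l n a" "r1 \<in> PL l n a" "fst r0 \<noteq> fst r1"
        "intercept \<mu> r1 = intercept \<mu> r0"
      using slope_edge_in_PL by blast
    then show "\<mu> \<in> ?slope ` (PL l n a \<times> PL l n a)"
      using intercept_eq_iff_slope[of r0 r1 \<mu>] by force
  qed
  then show ?thesis by (rule finite_subset) (simp add: finite_PL)
qed

lemma supporting_line_of_PL_in_slopes:
  assumes above: "\<forall>r\<in>PL l n a. c \<le> intercept \<mu> r"
    and AB: "A \<in> PL l n a" "B \<in> PL l n a" "intercept \<mu> A = c" "intercept \<mu> B = c" "fst A \<noteq> fst B"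
  shows "\<mu> \<in> slopes l n a"
proof -
  define w where "w = ((\<mu>, -1) :: real \<times> real)"
  have w: "w \<bullet> x = - intercept \<mu> x" for x unfolding w_def intercept_def by (simp add: inner_prod_def)
  define F where "F = newton_polygon l n a \<inter> {x. w \<bullet> x = - c}"
  have "F face_of newton_polygon l n a" unfolding F_def
    by (rule face_of_Int_supporting_hyperplane_le)
      (use newton_polygon_above_line[OF above] w in \<open>auto simp: newton_polygon_eq_convex_hull\<close>)
  moreover have "A \<in> newton_polygon l n a" "B \<in> newton_polygon l n a"
    using AB(1,2) PL_subset_newton_polygon by blast+
  then have ABF: "A \<in> F" "B \<in> F" unfolding F_def using AB w by auto
  moreover have "aff_dim F = 1"
  proof (rule antisym)
    have "aff_dim F \<le> aff_dim {x. w \<bullet> x = - c}" unfolding F_def by (rule aff_dim_subset) blast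
    also have "\<dots> = 1" using aff_dim_hyperplane[of w "- c"] by (simp add: w_def zero_prod_def)
    finally show "aff_dim F \<le> 1" .
    have "1 = aff_dim {A, B}" using AB(5) by auto
    also have "\<dots> \<le> aff_dim F" using ABF by (intro aff_dim_subset) auto
    finally show "1 \<le> aff_dim F" .
  qed
  moreover have "\<mu> = (snd B - snd A) / (fst B - fst A)"
    using intercept_eq_iff_slope[OF AB(5), of \<mu>] AB(3,4) by simp
  ultimately show ?thesis unfolding slopes_def using AB(5) by blast
qed

lemma PL_first_column:
  assumes "l \<ge> 2" "r \<in> PL l n a" "fst r \<le> 1"
  shows "real (pval (a 0)) \<le> snd r"
proof -
  obtain i j where r: "r = (real (l ^ i), real j)" "coeff (a i) j \<noteq> 0"
    using assms(2) unfolding PL_def by blast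
  have "i = 0"
  proof (rule ccontr)
    assume "i \<noteq> 0"
    then have "1 < real l ^ i" using assms(1) by (intro one_less_power) auto
    then show False using assms(3) r(1) by simp
  qed
  then show ?thesis using r pval_le by simp
qed

lemma slopes_nonempty:
  assumes "l \<ge> 2" "n \<ge> 1" "a 0 \<noteq> 0" "a n \<noteq> 0"
  shows "slopes l n a \<noteq> {}"
proof -
  define A where "A = (1 :: real, real (pval (a 0)))"
  have A: "A \<in> PL l n a" unfolding A_def PL_def using coeff_pval_nonzero[OF assms(3)]
    by (auto intro!: exI[of _ 0])
  define Q where "Q = {r \<in> PL l n a. fst r > 1}"
  have "(real (l ^ n), real (pval (a n))) \<in> Q"
    unfolding Q_def PL_def using coeff_pval_nonzero[OF assms(4)] assms(1,2) by auto
  then have "Q \<noteq> {}" by blast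
  have "finite Q" unfolding Q_def using finite_PL[of l n a] by simp
  text \<open>The lowest line through the leftmost point \<open>A\<close> that meets another point of \<open>PL\<close>.\<close>
  define g where "g r = (snd r - snd A) / (fst r - 1)" for r :: "real \<times> real"
  define B where "B = arg_min_on g Q"
  have B: "B \<in> Q" "\<forall>r\<in>Q. g B \<le> g r"
    using arg_min_if_finite[OF \<open>finite Q\<close> \<open>Q \<noteq> {}\<close>, of g] unfolding B_def by (auto simp: not_less)
  have "intercept (g B) A \<le> intercept (g B) r" if "r \<in> PL l n a" for r
  proof (cases "fst r > 1")
    case True
    then have "g B \<le> (snd r - snd A) / (fst r - 1)" using B(2) that unfolding Q_def g_def by simp
    then show ?thesis using True by (simp add: intercept_def A_def pos_le_divide_eq algebra_simps)
  next
    case False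
    then have "fst r = 1" using PL_fst_ge_1[OF _ that] assms(1) by force
    then show ?thesis using PL_first_column[OF assms(1) that] by (simp add: intercept_def A_def)
  qed
  moreover have "fst B > 1" "B \<in> PL l n a" using B(1) unfolding Q_def by auto
  moreover have "intercept (g B) B = intercept (g B) A"
    using \<open>fst B > 1\<close> by (simp add: intercept_def A_def g_def field_simps)
  ultimately have "g B \<in> slopes l n a"
    using supporting_line_of_PL_in_slopes[OF _ A] unfolding A_def by fastforce
  then show ?thesis by blast
qed

lemma Psi_eq_image: "Psi l n a v = (\<lambda>(x, y). v * x + y) ` PL l n a"
  unfolding Psi_def by auto

lemma piL_eq_Max_image: "piL l n a q = Max ((\<lambda>(x, y). (q - y) / x) ` PL l n a)"
proof -
  have "{(q - y) / x |x y. (x, y) \<in> PL l n a} = (\<lambda>(x, y). (q - y) / x) ` PL l n a" by auto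
  then show ?thesis unfolding piL_def by simp
qed

lemma piL_ge_of_Psi:
  assumes "l \<ge> 1" "q \<in> Psi l n a v"
  shows "v \<le> piL l n a q"
proof -
  obtain x y where xy: "(x, y) \<in> PL l n a" "q = v * x + y"
    using assms(2) unfolding Psi_def by blast
  have "x \<ge> 1" using PL_fst_ge_1[OF assms(1) xy(1)] by simp
  then have "v = (q - y) / x" using xy(2) by (simp add: field_simps)
  also have "\<dots> \<le> piL l n a q"
    unfolding piL_eq_Max_image using finite_PL[of l n a] xy(1) by (intro Max_ge) auto
  finally show ?thesis .
qed

text \<open>With \<open>r0\<close> a point of \<open>PL\<close> on the edge of slope \<open>\<mu>\<close>, the maximum defining
  \<open>piL (intercept \<mu> r0)\<close> is attained at \<open>r0\<close>.\<close>
lemma neg_slope_in_piL_Psi: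
  assumes "l \<ge> 1" "\<mu> \<in> slopes l n a"
  shows "- \<mu> \<in> piL l n a ` Psi l n a (- \<mu>)"
proof -
  obtain r0 where r0: "r0 \<in> PL l n a" "\<forall>r\<in>PL l n a. intercept \<mu> r0 \<le> intercept \<mu> r"
    using slope_edge_in_PL[OF assms(2)] by blast
  define q where "q = intercept \<mu> r0"
  have "q \<in> Psi l n a (- \<mu>)"
    unfolding Psi_eq_image q_def intercept_def using r0(1)
    by (intro image_eqI[of _ _ r0]) (auto simp: case_prod_beta)
  moreover have "piL l n a q = - \<mu>" unfolding piL_eq_Max_image
  proof (rule Max_eqI)
    show "finite ((\<lambda>(x, y). (q - y) / x) ` PL l n a)" using finite_PL by blast
  next
    fix t assume "t \<in> (\<lambda>(x, y). (q - y) / x) ` PL l n a"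
    then obtain x y where xy: "(x, y) \<in> PL l n a" "t = (q - y) / x" by auto
    have "x \<ge> 1" using PL_fst_ge_1[OF assms(1) xy(1)] by simp
    moreover have "q - y \<le> - \<mu> * x" using r0(2) xy(1) unfolding q_def intercept_def by force
    ultimately show "t \<le> - \<mu>" using xy(2) by (simp add: divide_le_eq)
  next
    have "fst r0 \<ge> 1" using PL_fst_ge_1[OF assms(1) r0(1)] .
    then have "(q - snd r0) / fst r0 = - \<mu>" unfolding q_def intercept_def by simp
    then show "- \<mu> \<in> (\<lambda>(x, y). (q - y) / x) ` PL l n a"
      using r0(1) by (intro image_eqI[of _ _ r0]) (auto simp: case_prod_beta)
  qed
  ultimately show ?thesis by force
qed

lemma finite_Vs: "finite (Vs l n a i)"
proof (induction i)
  case 0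
  then show ?case by (simp add: finite_slopes)
next
  case (Suc i)
  then show ?case by (simp add: Psi_eq_image finite_PL)
qed

lemma Vs_0_subset_Vs_1: "l \<ge> 1 \<Longrightarrow> Vs l n a 0 \<subseteq> Vs l n a 1"
  using neg_slope_in_piL_Psi by fastforce

lemma Vs_lower_bound:
  assumes "l \<ge> 1" "\<forall>\<mu>\<in>slopes l n a. \<mu> \<le> M" "w \<in> Vs l n a i"
  shows "- M \<le> w"
  using assms(3)
proof (induction i arbitrary: w)
  case 0
  then show ?case using assms(2) by auto
next
  case (Suc i)
  then obtain v q where "v \<in> Vs l n a i" "q \<in> Psi l n a v" "w = piL l n a q" by auto
  then show ?case using Suc.IH piL_ge_of_Psi[OF assms(1)] by force
qed

lemma Vs_dominates_Vs_1:
  assumes "l \<ge> 1" "M \<in> slopes l n a" "\<forall>\<mu>\<in>slopes l n a. \<mu> \<le> M"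
    and "w \<in> Vs l n a i" "- M < w"
  shows "\<exists>w'\<in>Vs l n a 1. - M < w' \<and> w' \<le> w"
  using assms(4,5)
proof (induction i arbitrary: w)
  case 0
  then show ?case using Vs_0_subset_Vs_1[OF assms(1)] by blast
next
  case (Suc i)
  then obtain v q where vq: "v \<in> Vs l n a i" "q \<in> Psi l n a v" "w = piL l n a q" by auto
  have "v \<le> w" using piL_ge_of_Psi[OF assms(1) vq(2)] vq(3) by simp
  show ?case
  proof (cases "v = - M")
    case True
    then have "w \<in> Vs l n a 1" using vq assms(2) by force
    then show ?thesis using Suc.prems(2) by blast
  next
    case False
    then have "- M < v" using Vs_lower_bound[OF assms(1,3) vq(1)] by simp
    then show ?thesis using Suc.IH[OF vq(1)] \<open>v \<le> w\<close> by force
  qed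
qed

lemma epsV_below_minimum:
  assumes "m \<in> VV l n a" "\<forall>w\<in>VV l n a. m \<le> w" "v < m"
  shows "epsV l n a v = ereal (m - v)"
proof -
  have "(LEAST w. w \<in> VV l n a \<and> v < w) = m"
    by (rule Least_equality) (use assms in auto)
  then show ?thesis unfolding epsV_def using assms(1,3) by auto
qed

lemma epsV_at_minimum:
  assumes "\<forall>w\<in>VV l n a. m \<le> w" "W \<subseteq> VV l n a" "finite W"
    and dominated: "\<forall>w\<in>VV l n a. m < w \<longrightarrow> (\<exists>w'\<in>W. m < w' \<and> w' \<le> w)"
  shows "epsV l n a m = (if W - {m} = {} then \<infinity> else ereal (Min (W - {m}) - m))"
proof (cases "W - {m} = {}")
  case True
  then have "{w \<in> VV l n a. w > m} = {}" using dominated by fastforce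
  then show ?thesis unfolding epsV_def using True by simp
next
  case False
  define w0 where "w0 = Min (W - {m})"
  have w0: "w0 \<in> W - {m}" "\<forall>w\<in>W - {m}. w0 \<le> w"
    unfolding w0_def using Min_in[of "W - {m}"] Min_le[of "W - {m}"] \<open>finite W\<close> False by auto
  then have w0V: "w0 \<in> VV l n a" "m < w0" using assms(1,2) by force+
  have "(LEAST w. w \<in> VV l n a \<and> m < w) = w0"
  proof (rule Least_equality)
    show "w0 \<in> VV l n a \<and> m < w0" using w0V by simp
  next
    fix y assume "y \<in> VV l n a \<and> m < y"
    then obtain w' where "w' \<in> W" "m < w'" "w' \<le> y" using dominated by blast
    then have "w0 \<le> w'" using w0(2) by auto
    then show "w0 \<le> y" using \<open>w' \<le> y\<close> by simp
  qed
  then show ?thesis unfolding epsV_def w0_def using False w0V by auto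
qed

theorem mainTheorem12:
  fixes l n d :: nat and a :: "nat \<Rightarrow> 'k::field poly"
  assumes "l \<ge> 2" and "n \<ge> 1" and "a 0 \<noteq> 0" and "a n \<noteq> 0"
    and "d \<ge> 1" and "\<forall>\<mu>\<in>slopes l n a. \<exists>k::int. real d * \<mu> = real_of_int k"
  shows "(\<forall>v \<in> Zdl d l. v < - Max (slopes l n a) \<longrightarrow>
            epsV l n a v = ereal (- Max (slopes l n a) - v) \<and> - Max (slopes l n a) - v > 0)
       \<and> epsV l n a (- Max (slopes l n a)) =
           (if Vs l n a 1 - {- Max (slopes l n a)} = {} then \<infinity>
            else ereal (Min (Vs l n a 1 - {- Max (slopes l n a)}) + Max (slopes l n a)))"
proof -
  define M where "M = Max (slopes l n a)"
  have "l \<ge> 1" using assms(1) by simp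
  have M: "M \<in> slopes l n a" "\<forall>\<mu>\<in>slopes l n a. \<mu> \<le> M"
    unfolding M_def using Max_in[OF finite_slopes slopes_nonempty[OF assms(1-4)]]
      Max_ge[OF finite_slopes, of _ l n a] by auto
  have VV: "w \<in> VV l n a \<longleftrightarrow> (\<exists>i. w \<in> Vs l n a i)" for w unfolding VV_def by blast
  have bottom: "- M \<in> VV l n a" using M(1) VV[of "- M"] by (metis Vs.simps(1) image_eqI)
  have minimal: "\<forall>w\<in>VV l n a. - M \<le> w" using Vs_lower_bound[OF \<open>l \<ge> 1\<close> M(2)] VV by blast
  have dominated: "\<forall>w\<in>VV l n a. - M < w \<longrightarrow> (\<exists>w'\<in>Vs l n a 1. - M < w' \<and> w' \<le> w)"
    using Vs_dominates_Vs_1[OF \<open>l \<ge> 1\<close> M] VV by blast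
  have "epsV l n a (- M)
      = (if Vs l n a 1 - {- M} = {} then \<infinity> else ereal (Min (Vs l n a 1 - {- M}) - - M))"
    by (rule epsV_at_minimum[OF minimal _ finite_Vs dominated]) (use VV in blast)
  moreover have "epsV l n a v = ereal (- M - v) \<and> - M - v > 0" if "v < - M" for v
    using epsV_below_minimum[OF bottom minimal that] that by simp
  ultimately show ?thesis unfolding M_def by (simp only: diff_minus_eq_add) blast
qed

end
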